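(* If $\mathcal{R}_0<1$, then the disease-free equilibrium $E_0=\left(\frac{\Lambda}{\lambda},\frac{r\Lambda}{\mu\lambda},0,0\right)$ of the model is globally asymptotically stable.
   Context: The model is $\dot S=\Lambda-F_1(S,I_1)-F_2(S,I_2)-\lambda S$, $\dot V_1=rS-(\mu+kI_2)V_1$, $\dot I_1=F_1(S,I_1)-\alpha_1I_1$, $\dot I_2=F_2(S,I_2)+kI_2V_1-\alpha_2I_2$ on $\mathbb{R}^4_+$. The constants $\Lambda,\mu,r,k,\gamma_1,\gamma_2>0$ and $v_1,v_2\ge0$; $\lambda=r+\mu$ and $\alpha_i=\gamma_i+v_i+\mu$. For $i=1,2$ the incidence functions satisfy: - (H1) $F_i(S,I_i)=I_if_i(S,I_i)$ with $F_i,f_i\in C^2(\mathbb{R}^2_+,\mathbb{R}_+)$ and $F_i(0,I_i)=F_i(S,0)=0$; - (H2) $\partial f_i/\partial S>0$ and $\partial f_i/\partial I_i\le0$; - (H3) $\lim_{I_i\to0^+}F_i(S,I_i)/I_i$ exists and is positive for $S>0$. Let $S^0=\Lambda/\lambda$ and $\sigma_i=\frac{\partial F_i}{\partial I_i}(S^0,0)$. Set $\mathcal{R}_1=\sigma_1/\alpha_1$, $\mathcal{R}_2=\sigma_2/\alpha_2+\frac{kr\Lambda}{\alpha_2\mu\lambda}$ and $\mathcal{R}_0=\max\{\mathcal{R}_1,\mathcal{R}_2\}$. *)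

theory Defs
  imports "HOL-Analysis.Analysis"
begin

definition quad :: "(real \<times> real) set" where
  "quad = {p. fst p \<ge> 0 \<and> snd p \<ge> 0}"

text \<open>C^1 and C^2 on a set (derivatives taken within the set, so one-sided on the boundary).\<close>
definition C1_on :: "(real \<times> real) set \<Rightarrow> (real \<times> real \<Rightarrow> real) \<Rightarrow> bool" where
  "C1_on A g \<longleftrightarrow> (\<exists>g1 g2.
     (\<forall>p\<in>A. (g has_derivative (\<lambda>h. g1 p * fst h + g2 p * snd h)) (at p within A))
     \<and> continuous_on A g1 \<and> continuous_on A g2)"

definition C2_on :: "(real \<times> real) set \<Rightarrow> (real \<times> real \<Rightarrow> real) \<Rightarrow> bool" where
  "C2_on A g \<longleftrightarrow> (\<exists>g1 g2.
     (\<forall>p\<in>A. (g has_derivative (\<lambda>h. g1 p * fst h + g2 p * snd h)) (at p within A))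
     \<and> C1_on A g1 \<and> C1_on A g2)"

definition incidence_ok :: "(real \<Rightarrow> real \<Rightarrow> real) \<Rightarrow> (real \<Rightarrow> real \<Rightarrow> real) \<Rightarrow> bool" where
  "incidence_ok F f \<longleftrightarrow>
     \<comment> \<open>(H1)\<close>
     (\<forall>S\<ge>0. \<forall>I\<ge>0. F S I = I * f S I \<and> F S I \<ge> 0 \<and> f S I \<ge> 0)
     \<and> C2_on quad (\<lambda>p. F (fst p) (snd p)) \<and> C2_on quad (\<lambda>p. f (fst p) (snd p))
     \<and> (\<forall>I\<ge>0. F 0 I = 0) \<and> (\<forall>S\<ge>0. F S 0 = 0)
     \<comment> \<open>(H2)\<close>
     \<and> (\<forall>S\<ge>0. \<forall>I\<ge>0. \<exists>d>0. ((\<lambda>s. f s I) has_real_derivative d) (at S within {0..}))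
     \<and> (\<forall>S\<ge>0. \<forall>I\<ge>0. \<exists>d\<le>0. ((\<lambda>i. f S i) has_real_derivative d) (at I within {0..}))
     \<comment> \<open>(H3)\<close>
     \<and> (\<forall>S>0. \<exists>L>0. ((\<lambda>I. F S I / I) \<longlongrightarrow> L) (at_right 0))"

definition model_rhs ::
  "real \<Rightarrow> real \<Rightarrow> real \<Rightarrow> real \<Rightarrow> real \<Rightarrow> real \<Rightarrow>
   (real \<Rightarrow> real \<Rightarrow> real) \<Rightarrow> (real \<Rightarrow> real \<Rightarrow> real) \<Rightarrow>
   real \<times> real \<times> real \<times> real \<Rightarrow> real \<times> real \<times> real \<times> real" where
  "model_rhs Lam mu r k alpha1 alpha2 F1 F2 x =
     (case x of (S, V1, I1, I2) \<Rightarrow>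
       (Lam - F1 S I1 - F2 S I2 - (r + mu) * S,
        r * S - (mu + k * I2) * V1,
        F1 S I1 - alpha1 * I1,
        F2 S I2 + k * I2 * V1 - alpha2 * I2))"

definition nonneg4 :: "real \<times> real \<times> real \<times> real \<Rightarrow> bool" where
  "nonneg4 x = (case x of (a, b, c, d) \<Rightarrow> a \<ge> 0 \<and> b \<ge> 0 \<and> c \<ge> 0 \<and> d \<ge> 0)"

definition is_solution ::
  "(real \<times> real \<times> real \<times> real \<Rightarrow> real \<times> real \<times> real \<times> real) \<Rightarrow>
   (real \<Rightarrow> real \<times> real \<times> real \<times> real) \<Rightarrow> bool" where
  "is_solution g x \<longleftrightarrow>
     (\<forall>t\<ge>0. nonneg4 (x t) \<and> (x has_vector_derivative g (x t)) (at t within {0..}))"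

definition globally_asymptotically_stable ::
  "(real \<times> real \<times> real \<times> real \<Rightarrow> real \<times> real \<times> real \<times> real) \<Rightarrow>
   real \<times> real \<times> real \<times> real \<Rightarrow> bool" where
  "globally_asymptotically_stable g E \<longleftrightarrow>
     (\<forall>\<epsilon>>0. \<exists>\<delta>>0. \<forall>x. is_solution g x \<and> dist (x 0) E < \<delta> \<longrightarrow> (\<forall>t\<ge>0. dist (x t) E < \<epsilon>))
     \<and> (\<forall>x. is_solution g x \<longrightarrow> (x \<longlongrightarrow> E) at_top)"

end

theory Submission
  imports Defs
begin

(*
  Every estimate is a linear differential inequality u' <= -a (u - c), which comparison with
  the exponential solution turns into u t <= max c (u 0), and into u t < c + e eventually when
  a > 0. Since S' <= Lam - (r + mu) S and V' <= r S - mu V, the classes S and V stay below S0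
  and V0 up to a multiple of the initial deviation, and eventually up to a multiple of any e > 0.
  By (H1)-(H2), F_i(S, I) <= I f_i(S_max, 0) while S <= S_max, so I_1 and I_2 obey linear
  inequalities with rates alpha_1 - f_1(S_max, 0) and alpha_2 - f_2(S_max, 0) - k V_max while
  V <= V_max. As sigma_i = f_i(S0, 0), the hypothesis R_0 < 1 says that these rates are positive
  for S_max = S0 and V_max = V0; by continuity of f_i(., 0) they stay positive for S_max = S0 + eta
  and V_max = V0 + (r / mu + 1) eta, so the infected classes decay. Once I_1 and I_2 are small,
  the same comparison bounds S and V from below. Run from time 0, this cascade bounds
  dist (x t) E0 by a multiple of dist (x 0) E0 (stability); run eventually, it yields
  convergence to E0.
*)

section \<open>Linear differential inequalities\<close>

lemma DERIV_within_nonpos_imp_nonincreasing: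
  fixes f :: "real \<Rightarrow> real"
  assumes "a \<le> b" "{a..b} \<subseteq> X"
    and deriv: "\<And>x. x \<in> {a..b} \<Longrightarrow> \<exists>y\<le>0. (f has_real_derivative y) (at x within X)"
  shows "f b \<le> f a"
proof -
  have "\<forall>x\<in>{a..b}. \<exists>y. y \<le> 0 \<and> (f has_real_derivative y) (at x within {a..b})"
    using deriv DERIV_subset[OF _ assms(2)] by blast
  then obtain f' where f': "\<And>x. x \<in> {a..b} \<Longrightarrow>
      f' x \<le> 0 \<and> (f has_real_derivative f' x) (at x within {a..b})"
    by metis
  obtain \<xi> where "\<xi> \<in> {a..b}" "f b - f a = f' \<xi> * (b - a)"
    using mvt_very_simple[OF \<open>a \<le> b\<close>, of f "\<lambda>x h. f' x * h"] f'
    by (auto simp: has_field_derivative_def)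
  moreover have "f' \<xi> * (b - a) \<le> 0"
    using f'[OF \<open>\<xi> \<in> {a..b}\<close>] \<open>a \<le> b\<close> by (simp add: mult_nonpos_nonneg)
  ultimately show ?thesis
    by linarith
qed

lemma linear_differential_inequality:
  fixes u u' :: "real \<Rightarrow> real"
  assumes deriv: "\<And>s. T \<le> s \<Longrightarrow> (u has_real_derivative u' s) (at s within {T..})"
    and ineq: "\<And>s. T \<le> s \<Longrightarrow> u' s \<le> -a * (u s - c)"
    and "T \<le> t"
  shows "u t \<le> c + (u T - c) * exp (-a * (t - T))"
proof -
  define w where "w s = (u s - c) * exp (a * (s - T))" for s
  have "w t \<le> w T"
  proof (rule DERIV_within_nonpos_imp_nonincreasing[OF \<open>T \<le> t\<close>, of "{T..}"])
    fix s assume s: "s \<in> {T..t}"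
    have "(w has_real_derivative exp (a * (s - T)) * (u' s + a * (u s - c))) (at s within {T..})"
      unfolding w_def using deriv s by (auto intro!: derivative_eq_intros simp: algebra_simps)
    moreover have "exp (a * (s - T)) * (u' s + a * (u s - c)) \<le> 0"
      using ineq[of s] s by (intro mult_nonneg_nonpos) auto
    ultimately show "\<exists>y\<le>0. (w has_real_derivative y) (at s within {T..})"
      by blast
  qed auto
  then have "u t - c \<le> (u T - c) / exp (a * (t - T))"
    by (simp add: w_def pos_le_divide_eq)
  then show ?thesis
    by (simp add: exp_minus divide_inverse)
qed

lemma linear_differential_inequality_max:
  fixes u u' :: "real \<Rightarrow> real"
  assumes "\<And>s. T \<le> s \<Longrightarrow> (u has_real_derivative u' s) (at s within {T..})"
    and "\<And>s. T \<le> s \<Longrightarrow> u' s \<le> -a * (u s - c)"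
    and "0 \<le> a" "T \<le> t"
  shows "u t \<le> max c (u T)"
proof -
  have "exp (-a * (t - T)) \<le> 1"
    using assms(3,4) by (simp add: mult_nonneg_nonneg)
  then have "(u T - c) * exp (-a * (t - T)) \<le> max 0 (u T - c)"
    by (cases "u T \<le> c") (auto intro: mult_nonpos_nonneg mult_left_le)
  then show ?thesis
    using linear_differential_inequality[OF assms(1,2,4)] by linarith
qed

lemma linear_differential_inequality_min:
  fixes u u' :: "real \<Rightarrow> real"
  assumes "\<And>s. T \<le> s \<Longrightarrow> (u has_real_derivative u' s) (at s within {T..})"
    and "\<And>s. T \<le> s \<Longrightarrow> -a * (u s - c) \<le> u' s"
    and "0 \<le> a" "T \<le> t"
  shows "min c (u T) \<le> u t"
proof -
  have "- u t \<le> max (- c) (- u T)"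
    using assms
    by (intro linear_differential_inequality_max[where u = "\<lambda>s. - u s" and u' = "\<lambda>s. - u' s" and a = a])
       (auto intro!: derivative_eq_intros simp: algebra_simps)
  then show ?thesis
    by linarith
qed

lemma linear_differential_inequality_eventually_less:
  fixes u u' :: "real \<Rightarrow> real"
  assumes deriv: "\<And>s. T \<le> s \<Longrightarrow> (u has_real_derivative u' s) (at s within {T..})"
    and ineq: "eventually (\<lambda>s. u' s \<le> -a * (u s - c)) at_top"
    and "0 < a" "c < b"
  shows "eventually (\<lambda>t. u t < b) at_top"
proof -
  obtain T' where "T \<le> T'" and ineq': "\<And>s. T' \<le> s \<Longrightarrow> u' s \<le> -a * (u s - c)"
    using ineq unfolding eventually_at_top_linorder by (metis max.cobounded1 max.cobounded2 order_trans)
  have bound: "u t \<le> c + (u T' - c) * exp (-a * (t - T'))" if "T' \<le> t" for t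
  proof (rule linear_differential_inequality[OF _ ineq' that])
    fix s assume "T' \<le> s"
    with deriv[of s] \<open>T \<le> T'\<close> show "(u has_real_derivative u' s) (at s within {T'..})"
      by (auto elim: DERIV_subset)
  qed
  have "filterlim (\<lambda>t. a * (-T' + t)) at_top at_top"
    using \<open>0 < a\<close> by (intro filterlim_tendsto_pos_mult_at_top[OF tendsto_const]
        filterlim_tendsto_add_at_top[OF tendsto_const] filterlim_ident)
  then have "filterlim (\<lambda>t. -a * (t - T')) at_bot at_top"
    by (simp add: filterlim_uminus_at_top)
  then have "((\<lambda>t. exp (-a * (t - T'))) \<longlongrightarrow> 0) at_top"
    using exp_at_bot filterlim_compose by blast
  then have "((\<lambda>t. c + (u T' - c) * exp (-a * (t - T'))) \<longlongrightarrow> c) at_top"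
    using tendsto_add[OF tendsto_const tendsto_mult_right_zero] by fastforce
  then have "eventually (\<lambda>t. c + (u T' - c) * exp (-a * (t - T')) < b) at_top"
    using \<open>c < b\<close> by (rule order_tendstoD)
  with eventually_ge_at_top[of T'] show ?thesis
    by eventually_elim (use bound in fastforce)
qed

lemma linear_differential_inequality_eventually_greater:
  fixes u u' :: "real \<Rightarrow> real"
  assumes "\<And>s. T \<le> s \<Longrightarrow> (u has_real_derivative u' s) (at s within {T..})"
    and "eventually (\<lambda>s. -a * (u s - c) \<le> u' s) at_top"
    and "0 < a" "b < c"
  shows "eventually (\<lambda>t. b < u t) at_top"
proof -
  have "eventually (\<lambda>t. - u t < - b) at_top"
  proof (rule linear_differential_inequality_eventually_less[where u' = "\<lambda>s. - u' s" and a = a and c = "- c"])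
    show "eventually (\<lambda>s. - u' s \<le> -a * (- u s - - c)) at_top"
      using assms(2) by eventually_elim (simp add: algebra_simps)
  qed (use assms in \<open>auto intro!: derivative_eq_intros\<close>)
  then show ?thesis
    by simp
qed

lemma tendsto_of_eventually_dist_less:
  fixes u :: "'a \<Rightarrow> 'b::metric_space"
  assumes "0 < L" and "\<And>e. 0 < e \<Longrightarrow> eventually (\<lambda>t. dist (u t) c < L * e) F"
  shows "(u \<longlongrightarrow> c) F"
proof (rule tendstoI)
  fix \<epsilon> :: real assume "0 < \<epsilon>"
  then show "eventually (\<lambda>t. dist (u t) c < \<epsilon>) F"
    using assms(1) assms(2)[of "\<epsilon> / L"] by simp
qed

lemma tendsto_zero_of_nonneg_eventually_less:
  fixes u :: "'a \<Rightarrow> real"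
  assumes "eventually (\<lambda>t. 0 \<le> u t) F" and "\<And>e. 0 < e \<Longrightarrow> eventually (\<lambda>t. u t < e) F"
  shows "(u \<longlongrightarrow> 0) F"
proof (rule order_tendstoI)
  fix a :: real assume "a < 0"
  show "eventually (\<lambda>t. a < u t) F"
    using assms(1) by eventually_elim (use \<open>a < 0\<close> in simp)
qed (rule assms(2))

lemma dist_Pair_ge: "dist a c \<le> dist (a, b) (c, d)" "dist b d \<le> dist (a, b) (c, d)"
  using dist_fst_le[of "(a, b)" "(c, d)"] dist_snd_le[of "(a, b)" "(c, d)"] by simp_all

lemma dist_Pair_le: "dist (a, b) (c, d) \<le> dist a c + dist b d"
  unfolding dist_Pair_Pair by (rule sqrt_sum_squares_le_sum) simp_all

section \<open>Incidence functions\<close>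

lemma incidence_okD:
  assumes "incidence_ok F f" "0 \<le> S" "0 \<le> I"
  shows "F S I = I * f S I" "0 \<le> F S I" "0 \<le> f S I"
    "\<exists>d>0. ((\<lambda>s. f s I) has_real_derivative d) (at S within {0..})"
    "\<exists>d\<le>0. ((\<lambda>i. f S i) has_real_derivative d) (at I within {0..})"
  using assms unfolding incidence_ok_def by (elim conjE; simp)+

lemma incidence_nonincreasing_in_I:
  assumes "incidence_ok F f" "0 \<le> S" "0 \<le> I" "I \<le> I'"
  shows "f S I' \<le> f S I"
  by (rule DERIV_within_nonpos_imp_nonincreasing[of I I' "{0..}"])
     (use assms incidence_okD(5)[OF assms(1,2)] in auto)

lemma incidence_nondecreasing_in_S:
  assumes "incidence_ok F f" "0 \<le> S" "S \<le> S'" "0 \<le> I"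
  shows "f S I \<le> f S' I"
proof -
  have "- f S' I \<le> - f S I"
  proof (rule DERIV_within_nonpos_imp_nonincreasing[of S S' "{0..}"])
    fix s assume "s \<in> {S..S'}"
    then obtain d where "0 < d" "((\<lambda>s. f s I) has_real_derivative d) (at s within {0..})"
      using incidence_okD(4)[OF assms(1) _ assms(4), of s] assms(2) by auto
    then show "\<exists>y\<le>0. ((\<lambda>s. - f s I) has_real_derivative y) (at s within {0..})"
      by (intro exI[of _ "- d"]) (auto intro!: derivative_eq_intros)
  qed (use assms in auto)
  then show ?thesis
    by simp
qed

lemma incidence_le_linear:
  assumes "incidence_ok F f" "0 \<le> S" "S \<le> S'" "0 \<le> I"
  shows "F S I \<le> I * f S' 0"
proof -
  have "F S I = I * f S I"
    using incidence_okD(1)[OF assms(1,2,4)] .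
  also have "\<dots> \<le> I * f S' 0"
    using incidence_nonincreasing_in_I[OF assms(1,2) order_refl assms(4)]
      incidence_nondecreasing_in_S[OF assms(1-3) order_refl] assms(4)
    by (intro mult_left_mono) auto
  finally show ?thesis .
qed

lemma incidence_isCont:
  assumes "incidence_ok F f" "0 < S"
  shows "isCont (\<lambda>s. f s 0) S"
proof -
  obtain d where "((\<lambda>s. f s 0) has_real_derivative d) (at S within {0..})"
    using incidence_okD(4)[OF assms(1) _ order_refl, of S] assms(2) by auto
  then have "((\<lambda>s. f s 0) has_real_derivative d) (at S within {0<..})"
    by (rule DERIV_subset) auto
  moreover have "at S within {0<..} = at S"
    using assms by (intro at_within_open) auto
  ultimately show ?thesis
    by (auto intro: DERIV_isCont)
qed

lemma incidence_derivative_at_zero: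
  assumes inc: "incidence_ok F f" and "0 \<le> S"
    and \<sigma>: "((\<lambda>I. F S I) has_real_derivative \<sigma>) (at 0 within {0..})"
  shows "\<sigma> = f S 0"
proof -
  obtain d where "((\<lambda>I. f S I) has_real_derivative d) (at 0 within {0..})"
    using incidence_okD(5)[OF inc \<open>0 \<le> S\<close> order_refl] by auto
  from DERIV_mult[OF DERIV_ident this]
  have "((\<lambda>I. I * f S I) has_real_derivative f S 0) (at 0 within {0..})"
    by simp
  then have "((\<lambda>I. F S I) has_real_derivative f S 0) (at 0 within {0..})"
    by (rule has_field_derivative_transform_within[of _ _ _ _ 1])
       (use incidence_okD(1)[OF inc \<open>0 \<le> S\<close>] in auto)
  moreover have "at (0::real) within {0..} \<noteq> bot"
    by (simp add: at_within_Ici_at_right)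
  ultimately show ?thesis
    using \<sigma> vector_derivative_unique_within
    unfolding has_real_derivative_iff_has_vector_derivative by blast
qed

section \<open>The vaccination model\<close>

locale model =
  fixes Lam mu r k a1 a2 :: real and F1 F2 f1 f2 :: "real \<Rightarrow> real \<Rightarrow> real"
  assumes Lam_pos: "0 < Lam" and mu_pos: "0 < mu" and r_pos: "0 < r" and k_pos: "0 < k"
    and incidence1: "incidence_ok F1 f1" and incidence2: "incidence_ok F2 f2"
begin

definition S0 :: real where "S0 = Lam / (r + mu)"

definition V0 :: real where "V0 = r * S0 / mu"

definition E0 :: "real \<times> real \<times> real \<times> real" where "E0 = (S0, V0, 0, 0)"

lemma S0_pos: "0 < S0"
  using Lam_pos mu_pos r_pos by (simp add: S0_def)

lemma V0_pos: "0 < V0"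
  using S0_pos mu_pos r_pos by (simp add: V0_def)

lemma Lam_eq: "Lam = (r + mu) * S0"
  using mu_pos r_pos by (simp add: S0_def)

lemma mu_V0: "mu * V0 = r * S0"
  using mu_pos by (simp add: V0_def)

lemma E0_eq: "E0 = (Lam / (r + mu), r * Lam / (mu * (r + mu)), 0, 0)"
  by (simp add: E0_def V0_def S0_def)

lemma threshold_conditions:
  assumes "0 < a1" "0 < a2"
    and "((\<lambda>I. F1 S0 I) has_real_derivative \<sigma>1) (at 0 within {0..})"
    and "((\<lambda>I. F2 S0 I) has_real_derivative \<sigma>2) (at 0 within {0..})"
    and "max (\<sigma>1 / a1) (\<sigma>2 / a2 + k * r * Lam / (a2 * mu * (r + mu))) < 1"
  shows "f1 S0 0 < a1" "f2 S0 0 + k * V0 < a2"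
proof -
  have "\<sigma>1 = f1 S0 0" "\<sigma>2 = f2 S0 0"
    using incidence_derivative_at_zero[OF incidence1 _ assms(3)]
      incidence_derivative_at_zero[OF incidence2 _ assms(4)] S0_pos
    by simp_all
  moreover have "\<sigma>2 / a2 + k * r * Lam / (a2 * mu * (r + mu)) = (\<sigma>2 + k * V0) / a2"
    using mu_pos r_pos \<open>0 < a2\<close> by (simp add: V0_def S0_def add_divide_distrib ac_simps)
  ultimately show "f1 S0 0 < a1" "f2 S0 0 + k * V0 < a2"
    using assms(1,2,5) by simp_all
qed

lemma margin_exists:
  assumes "f1 S0 0 < a1" "f2 S0 0 + k * V0 < a2"
  obtains \<eta> where "0 < \<eta>" "f1 (S0 + \<eta>) 0 < a1" "f2 (S0 + \<eta>) 0 + k * (V0 + (r / mu + 1) * \<eta>) < a2"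
proof -
  define g2 where "g2 s = f2 s 0 + k * (V0 + (r / mu + 1) * (s - S0))" for s
  have "isCont (\<lambda>s. f1 s 0) S0" "isCont g2 S0"
    unfolding g2_def using incidence_isCont[OF incidence1 S0_pos] incidence_isCont[OF incidence2 S0_pos]
    by (auto intro!: continuous_intros)
  then have "((\<lambda>s. f1 s 0) \<longlongrightarrow> f1 S0 0) (at_right S0)" "(g2 \<longlongrightarrow> g2 S0) (at_right S0)"
    by (simp_all add: isCont_def filterlim_at_split)
  moreover have "g2 S0 < a2"
    using assms(2) by (simp add: g2_def)
  ultimately have "eventually (\<lambda>s. f1 s 0 < a1 \<and> g2 s < a2 \<and> S0 < s) (at_right S0)"
    using assms(1) by (auto intro!: eventually_conj order_tendstoD eventually_at_right_less)
  then obtain s where "f1 s 0 < a1" "g2 s < a2" "S0 < s"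
    using eventually_happens[of _ "at_right S0"] by auto
  then show ?thesis
    by (intro that[of "s - S0"]) (simp_all add: g2_def)
qed

end

locale subthreshold = model +
  fixes \<eta> :: real
  assumes eta_pos: "0 < \<eta>"
    and margin1: "f1 (S0 + \<eta>) 0 < a1"
    and margin2: "f2 (S0 + \<eta>) 0 + k * (V0 + (r / mu + 1) * \<eta>) < a2"
begin

definition S_max :: real where "S_max = S0 + \<eta>"

definition V_max :: real where "V_max = V0 + (r / mu + 1) * \<eta>"

text \<open>Once \<open>I1, I2 \<le> e\<close>, the comparison yields \<open>S \<ge> S0 - LS * e\<close>, and then
  \<open>V \<ge> V0 - LV * e\<close>.\<close>

definition LS :: real where "LS = (f1 S_max 0 + f2 S_max 0) / (r + mu) + 1"

definition LV :: real where "LV = (r + k * V_max) * LS / mu + 1"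

definition L :: real where "L = LS + LV + 2"

lemma LS_ge_1: "1 \<le> LS"
  using incidence_okD(3)[OF incidence1, of S_max 0] incidence_okD(3)[OF incidence2, of S_max 0]
    S0_pos eta_pos mu_pos r_pos
  by (simp add: LS_def S_max_def)

lemma LV_ge: "r / mu + 1 \<le> LV"
proof -
  have "0 \<le> V_max"
    using V0_pos eta_pos mu_pos r_pos by (simp add: V_max_def)
  then have "r \<le> (r + k * V_max) * 1"
    using k_pos by simp
  also have "\<dots> \<le> (r + k * V_max) * LS"
    using LS_ge_1 \<open>0 \<le> V_max\<close> k_pos r_pos by (intro mult_left_mono) auto
  finally show ?thesis
    using mu_pos by (simp add: LV_def divide_right_mono)
qed

lemma LV_pos: "0 < LV"
  using LV_ge mu_pos r_pos by (metis add_pos_pos divide_pos_pos order_less_le_trans zero_less_one)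

lemma L_pos: "0 < L"
  using LS_ge_1 LV_pos by (simp add: L_def)

end

locale solution = subthreshold +
  fixes x :: "real \<Rightarrow> real \<times> real \<times> real \<times> real"
  assumes solves: "is_solution (model_rhs Lam mu r k a1 a2 F1 F2) x"
begin

definition S where "S t = fst (x t)"
definition V where "V t = fst (snd (x t))"
definition I1 where "I1 t = fst (snd (snd (x t)))"
definition I2 where "I2 t = snd (snd (snd (x t)))"

definition dS where "dS t = Lam - F1 (S t) (I1 t) - F2 (S t) (I2 t) - (r + mu) * S t"
definition dV where "dV t = r * S t - (mu + k * I2 t) * V t"
definition dI1 where "dI1 t = F1 (S t) (I1 t) - a1 * I1 t"
definition dI2 where "dI2 t = F2 (S t) (I2 t) + k * I2 t * V t - a2 * I2 t"

lemma x_eq: "x t = (S t, V t, I1 t, I2 t)"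
  by (simp add: S_def V_def I1_def I2_def)

lemma nonneg:
  assumes "0 \<le> t"
  shows "0 \<le> S t" "0 \<le> V t" "0 \<le> I1 t" "0 \<le> I2 t"
  using solves assms unfolding is_solution_def nonneg4_def by (auto simp: x_eq)

lemma derivatives:
  assumes "0 \<le> t"
  shows "(S has_real_derivative dS t) (at t within {0..})"
    and "(V has_real_derivative dV t) (at t within {0..})"
    and "(I1 has_real_derivative dI1 t) (at t within {0..})"
    and "(I2 has_real_derivative dI2 t) (at t within {0..})"
proof -
  have x': "(x has_vector_derivative (dS t, dV t, dI1 t, dI2 t)) (at t within {0..})"
    using solves assms unfolding is_solution_def
    by (simp add: x_eq model_rhs_def dS_def dV_def dI1_def dI2_def)
  note fst' = bounded_linear.has_vector_derivative[OF bounded_linear_fst]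
    and snd' = bounded_linear.has_vector_derivative[OF bounded_linear_snd]
  show "(S has_real_derivative dS t) (at t within {0..})"
    using fst'[OF x'] by (simp add: has_real_derivative_iff_has_vector_derivative S_def[abs_def])
  show "(V has_real_derivative dV t) (at t within {0..})"
    using fst'[OF snd'[OF x']] by (simp add: has_real_derivative_iff_has_vector_derivative V_def[abs_def])
  show "(I1 has_real_derivative dI1 t) (at t within {0..})"
    using fst'[OF snd'[OF snd'[OF x']]]
    by (simp add: has_real_derivative_iff_has_vector_derivative I1_def[abs_def])
  show "(I2 has_real_derivative dI2 t) (at t within {0..})"
    using snd'[OF snd'[OF snd'[OF x']]]
    by (simp add: has_real_derivative_iff_has_vector_derivative I2_def[abs_def])
qed

lemma dS_le:
  assumes "0 \<le> t"
  shows "dS t \<le> -(r + mu) * (S t - S0)"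
  using incidence_okD(2)[OF incidence1] incidence_okD(2)[OF incidence2] nonneg[OF assms] Lam_eq
  by (simp add: dS_def algebra_simps)

lemma dV_le:
  assumes "0 \<le> t" "S t \<le> S0 + e"
  shows "dV t \<le> -mu * (V t - (V0 + r * e / mu))"
proof -
  have "0 \<le> k * I2 t * V t"
    using nonneg[OF assms(1)] k_pos by simp
  moreover have "r * S t \<le> r * (S0 + e)"
    using assms(2) r_pos by simp
  moreover have "-mu * (V t - (V0 + r * e / mu)) = r * S0 + r * e - mu * V t"
    using mu_V0 mu_pos by (simp add: field_simps)
  ultimately show ?thesis
    by (simp add: dV_def algebra_simps)
qed

lemma dI1_le:
  assumes "0 \<le> t" "S t \<le> S'"
  shows "dI1 t \<le> -(a1 - f1 S' 0) * I1 t"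
  using incidence_le_linear[OF incidence1 nonneg(1)[OF assms(1)] assms(2) nonneg(3)[OF assms(1)]]
  by (simp add: dI1_def algebra_simps)

lemma dI2_le:
  assumes "0 \<le> t" "S t \<le> S'" "V t \<le> W"
  shows "dI2 t \<le> -(a2 - f2 S' 0 - k * W) * I2 t"
proof -
  have "k * I2 t * V t \<le> k * I2 t * W"
    using assms(3) nonneg[OF assms(1)] k_pos by (intro mult_left_mono) auto
  then show ?thesis
    using incidence_le_linear[OF incidence2 nonneg(1)[OF assms(1)] assms(2) nonneg(4)[OF assms(1)]]
    by (simp add: dI2_def algebra_simps)
qed

lemma dS_ge:
  assumes "0 \<le> t" "S t \<le> S'" "I1 t \<le> e" "I2 t \<le> e"
  shows "-(r + mu) * (S t - (S0 - (f1 S' 0 + f2 S' 0) * e / (r + mu))) \<le> dS t"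
proof -
  have "0 \<le> S'"
    using nonneg[OF assms(1)] assms(2) by linarith
  then have "0 \<le> f1 S' 0" "0 \<le> f2 S' 0"
    using incidence_okD(3)[OF incidence1] incidence_okD(3)[OF incidence2] by auto
  then have "F1 (S t) (I1 t) \<le> e * f1 S' 0" "F2 (S t) (I2 t) \<le> e * f2 S' 0"
    using incidence_le_linear[OF incidence1 _ assms(2)] incidence_le_linear[OF incidence2 _ assms(2)]
      nonneg[OF assms(1)] assms(3,4)
    by (meson mult_right_mono order_trans)+
  moreover have "-(r + mu) * (S t - (S0 - (f1 S' 0 + f2 S' 0) * e / (r + mu)))
      = Lam - (f1 S' 0 + f2 S' 0) * e - (r + mu) * S t"
    using Lam_eq mu_pos r_pos by (simp add: field_simps)
  ultimately show ?thesis
    by (simp add: dS_def algebra_simps)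
qed

lemma dV_ge:
  assumes "0 \<le> t" "S0 - e \<le> S t" "I2 t \<le> e" "V t \<le> W"
  shows "-mu * (V t - (V0 - (r + k * W) * e / mu)) \<le> dV t"
proof -
  have "k * I2 t * V t \<le> k * e * W"
    using assms nonneg[OF assms(1)] k_pos by (simp add: mult_mono)
  moreover have "r * (S0 - e) \<le> r * S t"
    using assms(2) r_pos by simp
  moreover have "-mu * (V t - (V0 - (r + k * W) * e / mu)) = r * S0 - (r + k * W) * e - mu * V t"
    using mu_V0 mu_pos by (simp add: field_simps)
  ultimately show ?thesis
    by (simp add: dV_def algebra_simps)
qed

definition d0 :: real where "d0 = dist (x 0) E0"

lemma initial_deviation: "\<bar>S 0 - S0\<bar> \<le> d0" "\<bar>V 0 - V0\<bar> \<le> d0" "I1 0 \<le> d0" "I2 0 \<le> d0"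
proof -
  have "dist (S 0) S0 \<le> d0" "dist (V 0) V0 \<le> d0" "dist (I1 0) 0 \<le> d0" "dist (I2 0) 0 \<le> d0"
    unfolding d0_def x_eq[of 0] E0_def by (meson dist_Pair_ge order_trans)+
  then show "\<bar>S 0 - S0\<bar> \<le> d0" "\<bar>V 0 - V0\<bar> \<le> d0" "I1 0 \<le> d0" "I2 0 \<le> d0"
    by (simp_all add: dist_real_def)
qed

lemma S_le_initial:
  assumes "0 \<le> t"
  shows "S t \<le> S0 + d0"
proof -
  have "S t \<le> max S0 (S 0)"
    by (rule linear_differential_inequality_max[OF derivatives(1) dS_le _ assms])
       (use mu_pos r_pos in auto)
  then show ?thesis
    using initial_deviation(1) by linarith
qed

lemma V_le_initial:
  assumes "0 \<le> t"
  shows "V t \<le> V0 + (r / mu + 1) * d0"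
proof -
  have "V t \<le> max (V0 + r * d0 / mu) (V 0)"
    by (rule linear_differential_inequality_max[OF derivatives(2) dV_le _ assms])
       (use S_le_initial mu_pos in auto)
  moreover have "0 \<le> r * d0 / mu"
    using mu_pos r_pos by (simp add: d0_def)
  ultimately show ?thesis
    using initial_deviation(2) by (simp add: algebra_simps)
qed

lemma S_le_S_max:
  assumes "d0 \<le> \<eta>" "0 \<le> t"
  shows "S t \<le> S_max"
  using S_le_initial[OF assms(2)] assms(1) by (simp add: S_max_def)

lemma V_le_V_max:
  assumes "d0 \<le> \<eta>" "0 \<le> t"
  shows "V t \<le> V_max"
proof -
  have "(r / mu + 1) * d0 \<le> (r / mu + 1) * \<eta>"
    using assms(1) mu_pos r_pos by (intro mult_left_mono) auto
  then show ?thesis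
    using V_le_initial[OF assms(2)] by (simp add: V_max_def)
qed

lemma I1_le_initial:
  assumes "d0 \<le> \<eta>" "0 \<le> t"
  shows "I1 t \<le> d0"
proof -
  have "I1 t \<le> max 0 (I1 0)"
    by (rule linear_differential_inequality_max[OF derivatives(3) _ _ assms(2), of "a1 - f1 S_max 0"])
       (use dI1_le S_le_S_max[OF assms(1)] margin1 in \<open>auto simp: S_max_def\<close>)
  then show ?thesis
    using initial_deviation(3) nonneg(3)[of 0] by (simp add: d0_def)
qed

lemma I2_le_initial:
  assumes "d0 \<le> \<eta>" "0 \<le> t"
  shows "I2 t \<le> d0"
proof -
  have "I2 t \<le> max 0 (I2 0)"
    by (rule linear_differential_inequality_max[OF derivatives(4) _ _ assms(2), of "a2 - f2 S_max 0 - k * V_max"])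
       (use dI2_le S_le_S_max[OF assms(1)] V_le_V_max[OF assms(1)] margin2
         in \<open>auto simp: S_max_def V_max_def\<close>)
  then show ?thesis
    using initial_deviation(4) nonneg(4)[of 0] by (simp add: d0_def)
qed

lemma S_ge_initial:
  assumes "d0 \<le> \<eta>" "0 \<le> t"
  shows "S0 - LS * d0 \<le> S t"
proof -
  define c where "c = S0 - (f1 S_max 0 + f2 S_max 0) * d0 / (r + mu)"
  have "min c (S 0) \<le> S t"
    unfolding c_def
    by (rule linear_differential_inequality_min[OF derivatives(1) dS_ge _ assms(2)])
       (use S_le_S_max[OF assms(1)] I1_le_initial[OF assms(1)] I2_le_initial[OF assms(1)] mu_pos r_pos in auto)
  moreover have "0 \<le> f1 S_max 0" "0 \<le> f2 S_max 0"
    using incidence_okD(3)[OF incidence1] incidence_okD(3)[OF incidence2] S0_pos eta_pos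
    by (simp_all add: S_max_def)
  then have "c \<le> S0"
    using mu_pos r_pos by (simp add: c_def d0_def)
  moreover have "c - d0 = S0 - LS * d0"
    by (simp add: c_def LS_def algebra_simps)
  ultimately show ?thesis
    using initial_deviation(1) by (simp add: d0_def)
qed

lemma V_ge_initial:
  assumes "d0 \<le> \<eta>" "0 \<le> t"
  shows "V0 - LV * d0 \<le> V t"
proof -
  define c where "c = V0 - (r + k * V_max) * (LS * d0) / mu"
  have "0 \<le> d0"
    by (simp add: d0_def)
  then have "d0 \<le> LS * d0"
    using LS_ge_1 by (simp add: mult_le_cancel_right1)
  then have "min c (V 0) \<le> V t"
    unfolding c_def
    by (intro linear_differential_inequality_min[OF derivatives(2) dV_ge _ assms(2)])
       (use S_ge_initial[OF assms(1)] I2_le_initial[OF assms(1)] V_le_V_max[OF assms(1)] mu_pos in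
        \<open>auto intro: order_trans\<close>)
  moreover have "0 \<le> V_max"
    using V0_pos eta_pos mu_pos r_pos by (simp add: V_max_def)
  then have "c \<le> V0"
    using \<open>0 \<le> d0\<close> LS_ge_1 mu_pos r_pos k_pos by (simp add: c_def)
  moreover have "c - d0 = V0 - LV * d0"
    using mu_pos by (simp add: c_def LV_def field_simps)
  ultimately show ?thesis
    using initial_deviation(2) by linarith
qed

lemma dist_le_initial:
  assumes "d0 \<le> \<eta>" "0 \<le> t"
  shows "dist (x t) E0 \<le> L * d0"
proof -
  have "dist (x t) E0 \<le> dist (S t) S0 + dist (V t, I1 t, I2 t) (V0, 0, 0)"
    using dist_Pair_le[of "S t" "(V t, I1 t, I2 t)" S0 "(V0, 0, 0)"] by (simp add: x_eq[of t] E0_def)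
  moreover have "dist (V t, I1 t, I2 t) (V0, 0, 0) \<le> dist (V t) V0 + dist (I1 t, I2 t) (0, 0)"
    by (rule dist_Pair_le)
  moreover have "dist (I1 t, I2 t) (0, 0) \<le> dist (I1 t) 0 + dist (I2 t) 0"
    by (rule dist_Pair_le)
  moreover have "dist (S t) S0 \<le> LS * d0" "dist (V t) V0 \<le> LV * d0"
    using S_le_initial[OF assms(2)] S_ge_initial[OF assms] V_le_initial[OF assms(2)] V_ge_initial[OF assms]
      LS_ge_1 LV_ge mult_right_mono[of 1 LS d0] mult_right_mono[of "r / mu + 1" LV d0]
    by (simp_all add: dist_real_def abs_le_iff d0_def)
  moreover have "dist (I1 t) 0 \<le> d0" "dist (I2 t) 0 \<le> d0"
    using I1_le_initial[OF assms] I2_le_initial[OF assms] nonneg[OF assms(2)] by (simp_all add: dist_real_def)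
  ultimately show ?thesis
    by (simp add: L_def algebra_simps)
qed

lemma S_eventually_less:
  assumes "0 < e"
  shows "eventually (\<lambda>t. S t < S0 + e) at_top"
proof (rule linear_differential_inequality_eventually_less[OF derivatives(1)])
  show "eventually (\<lambda>t. dS t \<le> -(r + mu) * (S t - S0)) at_top"
    using eventually_ge_at_top[of 0] by eventually_elim (rule dS_le)
qed (use assms mu_pos r_pos in auto)

lemma V_eventually_less:
  assumes "0 < e"
  shows "eventually (\<lambda>t. V t < V0 + (r / mu + 1) * e) at_top"
proof (rule linear_differential_inequality_eventually_less[OF derivatives(2)])
  show "eventually (\<lambda>t. dV t \<le> -mu * (V t - (V0 + r * e / mu))) at_top"
    using eventually_ge_at_top[of 0] S_eventually_less[OF assms]
    by eventually_elim (rule dV_le; simp)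
qed (use assms mu_pos in \<open>auto simp: algebra_simps\<close>)

lemma I1_eventually_less:
  assumes "0 < e"
  shows "eventually (\<lambda>t. I1 t < e) at_top"
proof (rule linear_differential_inequality_eventually_less[OF derivatives(3), where c = 0])
  show "eventually (\<lambda>t. dI1 t \<le> -(a1 - f1 S_max 0) * (I1 t - 0)) at_top"
    using eventually_ge_at_top[of 0] S_eventually_less[OF eta_pos]
  proof eventually_elim
    case (elim t)
    then show ?case
      using dI1_le[of t S_max] by (simp add: S_max_def)
  qed
qed (use assms margin1 in \<open>auto simp: S_max_def\<close>)

lemma I2_eventually_less:
  assumes "0 < e"
  shows "eventually (\<lambda>t. I2 t < e) at_top"
proof (rule linear_differential_inequality_eventually_less[OF derivatives(4), where c = 0])
  show "eventually (\<lambda>t. dI2 t \<le> -(a2 - f2 S_max 0 - k * V_max) * (I2 t - 0)) at_top"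
    using eventually_ge_at_top[of 0] S_eventually_less[OF eta_pos] V_eventually_less[OF eta_pos]
  proof eventually_elim
    case (elim t)
    then show ?case
      using dI2_le[of t S_max V_max] by (simp add: S_max_def V_max_def)
  qed
qed (use assms margin2 in \<open>auto simp: S_max_def V_max_def\<close>)

lemma S_eventually_greater:
  assumes "0 < e"
  shows "eventually (\<lambda>t. S0 - LS * e < S t) at_top"
proof (rule linear_differential_inequality_eventually_greater[OF derivatives(1)])
  show "eventually (\<lambda>t. -(r + mu) * (S t - (S0 - (f1 S_max 0 + f2 S_max 0) * e / (r + mu))) \<le> dS t) at_top"
    using eventually_ge_at_top[of 0] S_eventually_less[OF eta_pos] I1_eventually_less[OF assms]
      I2_eventually_less[OF assms]
    by eventually_elim (rule dS_ge; simp add: S_max_def)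
qed (use assms mu_pos r_pos in \<open>auto simp: LS_def algebra_simps\<close>)

lemma V_eventually_greater:
  assumes "0 < e"
  shows "eventually (\<lambda>t. V0 - LV * e < V t) at_top"
proof (rule linear_differential_inequality_eventually_greater[OF derivatives(2)])
  have "e \<le> LS * e"
    using LS_ge_1 assms by simp
  show "eventually (\<lambda>t. -mu * (V t - (V0 - (r + k * V_max) * (LS * e) / mu)) \<le> dV t) at_top"
    using eventually_ge_at_top[of 0] S_eventually_greater[OF assms] I2_eventually_less[OF assms]
      V_eventually_less[OF eta_pos]
    by eventually_elim (rule dV_ge; use \<open>e \<le> LS * e\<close> in \<open>simp add: V_max_def\<close>)
qed (use assms mu_pos in \<open>auto simp: LV_def field_simps\<close>)

lemma tendsto_E0: "(x \<longlongrightarrow> E0) at_top"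
proof -
  have "(S \<longlongrightarrow> S0) at_top"
  proof (rule tendsto_of_eventually_dist_less[OF order.strict_trans2[OF zero_less_one LS_ge_1]])
    fix e :: real assume "0 < e"
    then have "e \<le> LS * e"
      using LS_ge_1 by simp
    show "eventually (\<lambda>t. dist (S t) S0 < LS * e) at_top"
      using S_eventually_less[OF \<open>0 < e\<close>] S_eventually_greater[OF \<open>0 < e\<close>]
      by eventually_elim (use \<open>e \<le> LS * e\<close> in \<open>simp add: dist_real_def abs_less_iff\<close>)
  qed
  moreover have "(V \<longlongrightarrow> V0) at_top"
  proof (rule tendsto_of_eventually_dist_less[OF LV_pos])
    fix e :: real assume "0 < e"
    then have "(r / mu + 1) * e \<le> LV * e"
      using LV_ge by simp
    show "eventually (\<lambda>t. dist (V t) V0 < LV * e) at_top"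
      using V_eventually_less[OF \<open>0 < e\<close>] V_eventually_greater[OF \<open>0 < e\<close>]
      by eventually_elim (use \<open>(r / mu + 1) * e \<le> LV * e\<close> in \<open>simp add: dist_real_def abs_less_iff\<close>)
  qed
  moreover have "eventually (\<lambda>t. 0 \<le> I1 t) at_top"
    using eventually_ge_at_top[of 0] by eventually_elim (rule nonneg)
  moreover have "eventually (\<lambda>t. 0 \<le> I2 t) at_top"
    using eventually_ge_at_top[of 0] by eventually_elim (rule nonneg)
  ultimately have "((\<lambda>t. (S t, V t, I1 t, I2 t)) \<longlongrightarrow> E0) at_top"
    unfolding E0_def using I1_eventually_less I2_eventually_less
    by (intro tendsto_Pair tendsto_zero_of_nonneg_eventually_less)
  moreover have "(\<lambda>t. (S t, V t, I1 t, I2 t)) = x"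
    by (simp add: fun_eq_iff x_eq)
  ultimately show ?thesis
    by simp
qed

end

context subthreshold
begin

lemma lyapunov_stable:
  assumes "0 < \<epsilon>"
  shows "\<exists>\<delta>>0. \<forall>x. is_solution (model_rhs Lam mu r k a1 a2 F1 F2) x \<and> dist (x 0) E0 < \<delta>
           \<longrightarrow> (\<forall>t\<ge>0. dist (x t) E0 < \<epsilon>)"
proof (intro exI[of _ "min \<eta> (\<epsilon> / L)"] conjI allI impI)
  show "0 < min \<eta> (\<epsilon> / L)"
    using eta_pos L_pos assms by simp
  fix x and t :: real
  assume x: "is_solution (model_rhs Lam mu r k a1 a2 F1 F2) x \<and> dist (x 0) E0 < min \<eta> (\<epsilon> / L)"
    and "0 \<le> t"
  interpret solution Lam mu r k a1 a2 F1 F2 f1 f2 \<eta> x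
    by unfold_locales (use x in blast)
  have "dist (x t) E0 \<le> L * d0"
    using x \<open>0 \<le> t\<close> by (intro dist_le_initial) (simp_all add: d0_def)
  also have "\<dots> < \<epsilon>"
    using x L_pos by (simp add: d0_def pos_less_divide_eq mult.commute)
  finally show "dist (x t) E0 < \<epsilon>" .
qed

lemma globally_asymptotically_stable_E0:
  "globally_asymptotically_stable (model_rhs Lam mu r k a1 a2 F1 F2) E0"
  unfolding globally_asymptotically_stable_def
proof (intro conjI allI impI lyapunov_stable)
  fix x assume "is_solution (model_rhs Lam mu r k a1 a2 F1 F2) x"
  then interpret solution Lam mu r k a1 a2 F1 F2 f1 f2 \<eta> x
    by unfold_locales
  show "(x \<longlongrightarrow> E0) at_top"
    by (rule tendsto_E0)
qed

end

theorem mainTheorem12: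
  fixes Lam mu r k gamma1 gamma2 v1 v2 sigma1 sigma2 :: real
    and F1 F2 f1 f2 :: "real \<Rightarrow> real \<Rightarrow> real"
  assumes "Lam > 0" "mu > 0" "r > 0" "k > 0" "gamma1 > 0" "gamma2 > 0" "v1 \<ge> 0" "v2 \<ge> 0"
    and "incidence_ok F1 f1" "incidence_ok F2 f2"
    and "((\<lambda>I. F1 (Lam / (r + mu)) I) has_real_derivative sigma1) (at 0 within {0..})"
    and "((\<lambda>I. F2 (Lam / (r + mu)) I) has_real_derivative sigma2) (at 0 within {0..})"
    and "max (sigma1 / (gamma1 + v1 + mu))
             (sigma2 / (gamma2 + v2 + mu) + k * r * Lam / ((gamma2 + v2 + mu) * mu * (r + mu))) < 1"
  shows "globally_asymptotically_stable
           (model_rhs Lam mu r k (gamma1 + v1 + mu) (gamma2 + v2 + mu) F1 F2)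
           (Lam / (r + mu), r * Lam / (mu * (r + mu)), 0, 0)"
proof -
  define a1 a2 where "a1 = gamma1 + v1 + mu" and "a2 = gamma2 + v2 + mu"
  interpret model Lam mu r k a1 a2 F1 F2 f1 f2
    by unfold_locales (use assms in auto)
  have "0 < a1" "0 < a2"
    using assms by (simp_all add: a1_def a2_def)
  then have "f1 S0 0 < a1" "f2 S0 0 + k * V0 < a2"
    using threshold_conditions[OF _ _ assms(11,12)[folded S0_def]] assms(13)
    by (simp_all add: a1_def a2_def)
  then obtain \<eta> where "0 < \<eta>" "f1 (S0 + \<eta>) 0 < a1" "f2 (S0 + \<eta>) 0 + k * (V0 + (r / mu + 1) * \<eta>) < a2"
    by (rule margin_exists)
  then interpret subthreshold Lam mu r k a1 a2 F1 F2 f1 f2 \<eta>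
    by unfold_locales
  show ?thesis
    using globally_asymptotically_stable_E0 by (simp add: E0_eq a1_def a2_def)
qed

end
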